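(* Let $\mathbf{F}\in\{\mathbf{R},\mathbf{C}\}$, let $A_1,\dots,A_n\in\mathbf{H}_d$ be positive semidefinite, let $Z_*\in\mathbf{H}_d$ be positive semidefinite of rank $r\ge1$, let $\xi\in\mathbf{R}^n$ and $y=\mathcal{A}(Z_* )+\xi$. Let $X_*\in\mathbf{F}^{d\times r}$ satisfy $Z_*=X_*X_*^*$. Let $X\in\mathbf{F}^{d\times p}$ be a second-order critical point of $f_p(X)=\|y-\mathcal{A}(XX^* )\|^2$. Then for every $R\in\mathbf{F}^{p\times r}$, $$\|\mathcal{A}(XX^*-Z_* )\|^2\le\langle\xi,\mathcal{A}(XX^*-Z_* )\rangle+\frac{2}{p+2}\big\langle y,\mathcal{A}((X_*-XR)(X_*-XR)^* )\big\rangle\le\langle\xi,\mathcal{A}(XX^*-Z_* )\rangle+\frac{2\|\mathcal{A}^*(y)\|_{\mathrm{op}}}{p+2}\|X_*-XR\|_F^2 .$$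
   Context: $\mathbf{H}_d$: $d\times d$ Hermitian matrices over $\mathbf{F}$ with real Frobenius inner product $\langle A,B\rangle=\operatorname{Re}\operatorname{tr}(A^*B)$. $\mathcal{A}(S)=(\langle A_1,S\rangle,\dots,\langle A_n,S\rangle)\in\mathbf{R}^n$, $\mathcal{A}^*(z)=\sum_iz_iA_i$. A second-order critical point is a point where the gradient is zero and the Hessian is positive semidefinite (in the complex case, with respect to the real and imaginary parts of $X$). *)

theory Defs
  imports Complex_Main "Jordan_Normal_Form.DL_Rank"
begin

text \<open>Matrices over F are represented as complex matrices whose entries lie in a
  set K, where K is either the reals (F = R) or all complex numbers (F = C).\<close>

definition field_choice :: "complex set \<Rightarrow> bool" where
  "field_choice K \<longleftrightarrow> K = \<real> \<or> K = UNIV"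

definition entries_in :: "complex set \<Rightarrow> complex mat \<Rightarrow> bool" where
  "entries_in K M \<longleftrightarrow> (\<forall>i<dim_row M. \<forall>j<dim_col M. M $$ (i,j) \<in> K)"

definition vec_entries_in :: "complex set \<Rightarrow> complex vec \<Rightarrow> bool" where
  "vec_entries_in K v \<longleftrightarrow> (\<forall>i<dim_vec v. v $ i \<in> K)"

definition adj :: "complex mat \<Rightarrow> complex mat" where
  "adj M = mat (dim_col M) (dim_row M) (\<lambda>(i,j). cnj (M $$ (j,i)))"

definition mtrace :: "complex mat \<Rightarrow> complex" where
  "mtrace M = (\<Sum>i<dim_row M. M $$ (i,i))"

definition hinner :: "complex mat \<Rightarrow> complex mat \<Rightarrow> real" where
  "hinner A B = Re (mtrace (adj A * B))"

definition hermitian :: "nat \<Rightarrow> complex mat \<Rightarrow> bool" where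
  "hermitian d A \<longleftrightarrow> A \<in> carrier_mat d d \<and> adj A = A"

definition psd :: "complex set \<Rightarrow> nat \<Rightarrow> complex mat \<Rightarrow> bool" where
  "psd K d A \<longleftrightarrow> hermitian d A \<and>
     (\<forall>v \<in> carrier_vec d. vec_entries_in K v \<longrightarrow>
        0 \<le> Re (\<Sum>i<d. cnj (v $ i) * (A *\<^sub>v v) $ i))"

definition meas :: "(nat \<Rightarrow> complex mat) \<Rightarrow> complex mat \<Rightarrow> nat \<Rightarrow> real" where
  "meas As S i = hinner (As i) S"

definition meas_adj :: "nat \<Rightarrow> nat \<Rightarrow> (nat \<Rightarrow> complex mat) \<Rightarrow> (nat \<Rightarrow> real) \<Rightarrow> complex mat" where
  "meas_adj d n As z = mat d d (\<lambda>(i,j). \<Sum>k<n. complex_of_real (z k) * As k $$ (i,j))"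

definition vnorm :: "complex vec \<Rightarrow> real" where
  "vnorm v = sqrt (\<Sum>i<dim_vec v. (cmod (v $ i))\<^sup>2)"

definition op_norm :: "complex set \<Rightarrow> complex mat \<Rightarrow> real" where
  "op_norm K M = Sup {vnorm (M *\<^sub>v v) | v. v \<in> carrier_vec (dim_col M) \<and>
                                            vec_entries_in K v \<and> vnorm v \<le> 1}"

definition frob_sq :: "complex mat \<Rightarrow> real" where
  "frob_sq M = (\<Sum>i<dim_row M. \<Sum>j<dim_col M. (cmod (M $$ (i,j)))\<^sup>2)"

definition fobj :: "nat \<Rightarrow> (nat \<Rightarrow> complex mat) \<Rightarrow> (nat \<Rightarrow> real) \<Rightarrow> complex mat \<Rightarrow> real" where
  "fobj n As y X = (\<Sum>i<n. (y i - meas As (X * adj X) i)\<^sup>2)"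

text \<open>Second-order critical point of f_p on F^{d x p}: for every direction V \<in> F^{d x p},
  the function t \<mapsto> f_p(X + tV) has zero derivative and nonnegative second derivative
  at t = 0 (i.e. gradient zero and Hessian PSD w.r.t. the real parameters of X).\<close>
definition second_order_critical ::
  "complex set \<Rightarrow> nat \<Rightarrow> nat \<Rightarrow> nat \<Rightarrow> (nat \<Rightarrow> complex mat) \<Rightarrow> (nat \<Rightarrow> real) \<Rightarrow> complex mat \<Rightarrow> bool" where
  "second_order_critical K d p n As y X \<longleftrightarrow>
     X \<in> carrier_mat d p \<and> entries_in K X \<and>
     (\<forall>V \<in> carrier_mat d p. entries_in K V \<longrightarrow>
        (let g = (\<lambda>t::real. fobj n As y (X + complex_of_real t \<cdot>\<^sub>m V)) in
          (g has_real_derivative 0) (at 0) \<and>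
          (\<exists>g' s. (\<forall>t. (g has_real_derivative g' t) (at t)) \<and>
                  (g' has_real_derivative s) (at 0) \<and> 0 \<le> s)))"

end

theory Submission
  imports Defs "HOL-Analysis.L2_Norm"
begin

text \<open>Write e = \<A>(XX^*) - y and D = X_* - XR. The first-order condition says that
  \<A>^*(e) X = 0; hence <e, \<A>(XX^*)> = 0, and <e, \<A>(DD^*)> = <e, \<A>(Z_*)> because the columns
  of XR lie in the column space of X. Perturbing the j-th column x_j of X in a direction u, the
  second-order condition reads 2 \<Sum>_i <A_i x_j, u>^2 + <\<A>^*(e) u, u> \<ge> 0. By Cauchy-Schwarz for
  the semidefinite forms A_i and summation over the p columns,
  2 <\<A>(XX^*), \<A>(uu^*)> + p <e, \<A>(uu^*)> \<ge> 0. Summed over the columns u of D this gives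
  2 <\<A>(XX^*), \<A>(DD^*)> + p <e, \<A>(DD^*)> \<ge> 0, and expanding \<parallel>\<A>(XX^* - Z_*)\<parallel>^2 with
  the two identities above yields the first inequality. The second one is
  <\<A>^*(y), DD^*> \<le> \<parallel>\<A>^*(y)\<parallel>_op \<parallel>D\<parallel>_F^2.\<close>

lemma field_choice_of_real: "field_choice K \<Longrightarrow> complex_of_real t \<in> K"
  unfolding field_choice_def by auto

lemma field_choice_zero: "field_choice K \<Longrightarrow> 0 \<in> K"
  unfolding field_choice_def by auto

lemma field_choice_add: "field_choice K \<Longrightarrow> a \<in> K \<Longrightarrow> b \<in> K \<Longrightarrow> a + b \<in> K"
  unfolding field_choice_def by auto

lemma field_choice_diff: "field_choice K \<Longrightarrow> a \<in> K \<Longrightarrow> b \<in> K \<Longrightarrow> a - b \<in> K"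
  unfolding field_choice_def by auto

lemma field_choice_mult: "field_choice K \<Longrightarrow> a \<in> K \<Longrightarrow> b \<in> K \<Longrightarrow> a * b \<in> K"
  unfolding field_choice_def by auto

lemma field_choice_cnj: "field_choice K \<Longrightarrow> a \<in> K \<Longrightarrow> cnj a \<in> K"
  unfolding field_choice_def by (auto simp: Reals_cnj_iff)

lemma field_choice_sum: "field_choice K \<Longrightarrow> (\<And>k. k \<in> S \<Longrightarrow> f k \<in> K) \<Longrightarrow> sum f S \<in> K"
  unfolding field_choice_def by (auto intro: sum_in_Reals)

lemma entries_in_index: "entries_in K M \<Longrightarrow> M \<in> carrier_mat m k \<Longrightarrow> i < m \<Longrightarrow> j < k \<Longrightarrow> M $$ (i,j) \<in> K"
  unfolding entries_in_def by auto

lemma entries_in_minus: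
  assumes "field_choice K" "A \<in> carrier_mat m k" "B \<in> carrier_mat m k" "entries_in K A" "entries_in K B"
  shows "entries_in K (A - B)"
  using assms unfolding entries_in_def by (auto intro: field_choice_diff)

lemma entries_in_mult:
  assumes "field_choice K" "A \<in> carrier_mat m k" "B \<in> carrier_mat k l" "entries_in K A" "entries_in K B"
  shows "entries_in K (A * B)"
  using assms unfolding entries_in_def
  by (auto simp: scalar_prod_def intro!: field_choice_sum field_choice_mult)

lemma psd_hermitian: "psd K d A \<Longrightarrow> hermitian d A"
  unfolding psd_def by simp

lemma hermitian_index_swap:
  assumes "hermitian d A" "a < d" "b < d"
  shows "A $$ (b,a) = cnj (A $$ (a,b))"
proof -
  have e: "adj A = A" and A: "A \<in> carrier_mat d d" using assms(1) unfolding hermitian_def by simp_all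
  have "A $$ (b,a) = adj A $$ (b,a)" by (subst e) (rule refl)
  also have "\<dots> = cnj (A $$ (a,b))" using A assms(2,3) unfolding adj_def by simp
  finally show ?thesis .
qed

subsection \<open>The real form Re (w^* A u)\<close>

definition hform :: "nat \<Rightarrow> complex mat \<Rightarrow> (nat \<Rightarrow> complex) \<Rightarrow> (nat \<Rightarrow> complex) \<Rightarrow> real" where
  "hform d A u w = (\<Sum>a<d. \<Sum>b<d. Re (cnj (w a) * A $$ (a,b) * u b))"

lemma hform_cong:
  "(\<And>a. a < d \<Longrightarrow> u a = u' a) \<Longrightarrow> (\<And>a. a < d \<Longrightarrow> w a = w' a) \<Longrightarrow> hform d A u w = hform d A u' w'"
  unfolding hform_def by (intro sum.cong) auto

lemma hform_commute:
  assumes "hermitian d A"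
  shows "hform d A u w = hform d A w u"
proof -
  have "hform d A u w = (\<Sum>a<d. \<Sum>b<d. Re (cnj (u b) * A $$ (b,a) * w a))"
    unfolding hform_def
  proof (intro sum.cong refl)
    fix a b assume "a \<in> {..<d}" "b \<in> {..<d}"
    then have "A $$ (b,a) = cnj (A $$ (a,b))" by (intro hermitian_index_swap[OF assms]) auto
    then have "cnj (u b) * A $$ (b,a) * w a = cnj (cnj (w a) * A $$ (a,b) * u b)" by simp
    then show "Re (cnj (w a) * A $$ (a,b) * u b) = Re (cnj (u b) * A $$ (b,a) * w a)"
      by (simp only: cnj.sel(1))
  qed
  also have "\<dots> = hform d A w u" unfolding hform_def by (rule sum.swap)
  finally show ?thesis .
qed

lemma hform_add_left: "hform d A (\<lambda>a. u a + v a) w = hform d A u w + hform d A v w"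
  unfolding hform_def by (simp add: distrib_left distrib_right sum.distrib)

lemma hform_add_right: "hform d A u (\<lambda>a. v a + w a) = hform d A u v + hform d A u w"
  unfolding hform_def by (simp add: distrib_left distrib_right sum.distrib)

lemma hform_diff_left: "hform d A (\<lambda>a. u a - v a) w = hform d A u w - hform d A v w"
  unfolding hform_def by (simp add: left_diff_distrib right_diff_distrib sum_subtractf)

lemma hform_diff_right: "hform d A u (\<lambda>a. v a - w a) = hform d A u v - hform d A u w"
  unfolding hform_def by (simp add: left_diff_distrib right_diff_distrib sum_subtractf)

lemma hform_scale_left: "hform d A (\<lambda>a. c * u a) w = hform d A u (\<lambda>a. cnj c * w a)"
  unfolding hform_def by (simp add: ac_simps)

lemma hform_scaleR_left: "hform d A (\<lambda>a. complex_of_real t * u a) w = t * hform d A u w"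
  unfolding hform_def sum_distrib_left by (intro sum.cong refl) (simp add: algebra_simps)

lemma hform_scaleR_right: "hform d A u (\<lambda>a. complex_of_real t * w a) = t * hform d A u w"
  unfolding hform_def sum_distrib_left by (intro sum.cong refl) (simp add: algebra_simps)

lemma hform_zero_left [simp]: "hform d A (\<lambda>a. 0) w = 0"
  unfolding hform_def by simp

lemma hform_zero_right [simp]: "hform d A u (\<lambda>a. 0) = 0"
  unfolding hform_def by simp

lemma hform_sum_left: "hform d A (\<lambda>a. \<Sum>k\<in>S. f k a) w = (\<Sum>k\<in>S. hform d A (f k) w)"
  unfolding hform_def by (simp add: sum_distrib_left sum_distrib_right sum.swap[of _ S])

lemma hform_line:
  "hform d A (\<lambda>a. x a + complex_of_real t * v a) (\<lambda>a. x a + complex_of_real t * v a)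
   = hform d A x x + t * (hform d A x v + hform d A v x) + t\<^sup>2 * hform d A v v"
  unfolding hform_add_left hform_add_right hform_scaleR_left hform_scaleR_right
  by (simp add: algebra_simps power2_eq_square)

lemma hform_eq_Re_mult_vec:
  assumes "A \<in> carrier_mat d d"
  shows "hform d A u w = Re (\<Sum>a<d. cnj (w a) * (A *\<^sub>v vec d u) $ a)"
  unfolding hform_def Re_sum
proof (intro sum.cong refl)
  fix a assume a: "a \<in> {..<d}"
  have "(A *\<^sub>v vec d u) $ a = (\<Sum>b<d. A $$ (a,b) * u b)"
    using assms a by (simp add: scalar_prod_def atLeast0LessThan)
  then show "(\<Sum>b<d. Re (cnj (w a) * A $$ (a,b) * u b)) = Re (cnj (w a) * (A *\<^sub>v vec d u) $ a)"
    by (simp add: sum_distrib_left Re_sum mult.assoc del: times_complex.sel)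
qed

lemma hform_nonneg:
  assumes "psd K d A" "\<And>a. a < d \<Longrightarrow> u a \<in> K"
  shows "0 \<le> hform d A u u"
proof -
  have "vec_entries_in K (vec d u)" using assms(2) unfolding vec_entries_in_def by simp
  then have "0 \<le> Re (\<Sum>a<d. cnj (vec d u $ a) * (A *\<^sub>v vec d u) $ a)"
    using assms(1) unfolding psd_def by auto
  also have "\<dots> = hform d A u u"
    using assms(1) by (simp add: hform_eq_Re_mult_vec psd_def hermitian_def)
  finally show ?thesis .
qed

lemma quadratic_nonneg_discriminant:
  fixes a b c :: real
  assumes "\<And>t. 0 \<le> c + 2 * t * b + t\<^sup>2 * a" "0 \<le> a"
  shows "b\<^sup>2 \<le> a * c"
proof (cases "a = 0")
  case True
  show ?thesis
  proof (rule ccontr)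
    assume "\<not> ?thesis"
    then have "b \<noteq> 0" using True by simp
    have "0 \<le> c + 2 * (- (c + 1) / (2 * b)) * b + (- (c + 1) / (2 * b))\<^sup>2 * a" by (rule assms(1))
    also have "\<dots> = -1" using True \<open>b \<noteq> 0\<close> by (simp add: field_simps)
    finally show False by simp
  qed
next
  case False
  then have a: "a > 0" using assms(2) by simp
  have "0 \<le> c + 2 * (- b / a) * b + (- b / a)\<^sup>2 * a" by (rule assms(1))
  also have "\<dots> = c - b\<^sup>2 / a" using a by (simp add: field_simps power2_eq_square)
  finally show ?thesis using a by (simp add: field_simps)
qed

lemma hform_cauchy_schwarz:
  assumes "psd K d A" "field_choice K" "\<And>a. a < d \<Longrightarrow> u a \<in> K" "\<And>a. a < d \<Longrightarrow> x a \<in> K"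
  shows "(hform d A x u)\<^sup>2 \<le> hform d A x x * hform d A u u"
proof (rule quadratic_nonneg_discriminant)
  fix t :: real
  have "0 \<le> hform d A (\<lambda>a. u a + complex_of_real t * x a) (\<lambda>a. u a + complex_of_real t * x a)"
    using assms by (intro hform_nonneg[OF assms(1)] field_choice_add field_choice_mult field_choice_of_real)
  also have "\<dots> = hform d A u u + 2 * t * hform d A x u + t\<^sup>2 * hform d A x x"
    unfolding hform_line using hform_commute[OF psd_hermitian[OF assms(1)], of u x] by simp
  finally show "0 \<le> hform d A u u + 2 * t * hform d A x u + t\<^sup>2 * hform d A x x" .
next
  show "0 \<le> hform d A x x" using assms by (intro hform_nonneg[OF assms(1)])
qed

lemma hinner_hermitian_eq:
  assumes "hermitian d A" "M \<in> carrier_mat d d"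
  shows "hinner A M = (\<Sum>i<d. \<Sum>j<d. Re (A $$ (i,j) * M $$ (j,i)))"
proof -
  have A: "adj A = A" "A \<in> carrier_mat d d" using assms(1) unfolding hermitian_def by auto
  have "(A * M) $$ (i,i) = (\<Sum>j<d. A $$ (i,j) * M $$ (j,i))" if "i < d" for i
    using A assms(2) that by (simp add: scalar_prod_def atLeast0LessThan)
  then show ?thesis
    unfolding hinner_def mtrace_def A(1) using A(2) by (simp add: Re_sum)
qed

lemma hinner_diff:
  assumes "hermitian d A" "M \<in> carrier_mat d d" "N \<in> carrier_mat d d"
  shows "hinner A (M - N) = hinner A M - hinner A N"
proof -
  have "M - N \<in> carrier_mat d d" using assms(3) by (rule minus_carrier_mat)
  then show ?thesis
    using assms by (simp add: hinner_hermitian_eq right_diff_distrib sum_subtractf del: times_complex.sel)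
qed

lemma adj_carrier: "M \<in> carrier_mat d m \<Longrightarrow> adj M \<in> carrier_mat m d"
  unfolding adj_def by simp

lemma mult_adj_carrier: "M \<in> carrier_mat d m \<Longrightarrow> M * adj M \<in> carrier_mat d d"
  by (rule mult_carrier_mat[OF _ adj_carrier])

lemma hinner_mult_adj:
  assumes "hermitian d A" "U \<in> carrier_mat d m" "W \<in> carrier_mat d m"
  shows "hinner A (U * adj W) = (\<Sum>k<m. hform d A (\<lambda>a. U $$ (a,k)) (\<lambda>a. W $$ (a,k)))"
proof -
  have W: "adj W \<in> carrier_mat m d" using assms(3) by (rule adj_carrier)
  have "(U * adj W) $$ (j,i) = (\<Sum>k<m. U $$ (j,k) * cnj (W $$ (i,k)))" if "i < d" "j < d" for i j
    using assms(2,3) W that by (simp add: scalar_prod_def atLeast0LessThan adj_def)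
  then have "hinner A (U * adj W) = (\<Sum>i<d. \<Sum>j<d. \<Sum>k<m. Re (cnj (W $$ (i,k)) * A $$ (i,j) * U $$ (j,k)))"
    using assms(1,2) W
    by (simp add: hinner_hermitian_eq sum_distrib_left Re_sum ac_simps del: times_complex.sel)
  also have "\<dots> = (\<Sum>k<m. hform d A (\<lambda>a. U $$ (a,k)) (\<lambda>a. W $$ (a,k)))"
    unfolding hform_def by (simp add: sum.swap[of _ "{..<m}"])
  finally show ?thesis .
qed

lemma hermitian_meas_adj:
  assumes "\<forall>i<n. hermitian d (As i)"
  shows "hermitian d (meas_adj d n As z)"
proof -
  have "cnj (\<Sum>k<n. complex_of_real (z k) * As k $$ (j,i)) = (\<Sum>k<n. complex_of_real (z k) * As k $$ (i,j))"
    if "i < d" "j < d" for i j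
    using assms hermitian_index_swap[of d "As _" j i] that by simp
  then show ?thesis
    unfolding hermitian_def meas_adj_def adj_def by (auto intro!: eq_matI)
qed

lemma hform_meas_adj: "hform d (meas_adj d n As z) u w = (\<Sum>i<n. z i * hform d (As i) u w)"
proof -
  have "cnj (w a) * (\<Sum>i<n. complex_of_real (z i) * As i $$ (a,b)) * u b
      = (\<Sum>i<n. complex_of_real (z i) * (cnj (w a) * As i $$ (a,b) * u b))" for a b
    by (simp add: sum_distrib_left sum_distrib_right ac_simps)
  then show ?thesis
    unfolding hform_def meas_adj_def
    by (simp add: Re_sum sum_distrib_left sum.swap[of _ "{..<n}"])
qed

lemma hinner_meas_adj:
  assumes "\<forall>i<n. hermitian d (As i)" "M \<in> carrier_mat d d"
  shows "hinner (meas_adj d n As z) M = (\<Sum>i<n. z i * meas As M i)"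
proof -
  have "hinner (meas_adj d n As z) M
      = (\<Sum>a<d. \<Sum>b<d. Re ((\<Sum>i<n. complex_of_real (z i) * As i $$ (a,b)) * M $$ (b,a)))"
    using hinner_hermitian_eq[OF hermitian_meas_adj[OF assms(1)] assms(2)] by (simp add: meas_adj_def)
  also have "\<dots> = (\<Sum>i<n. z i * (\<Sum>a<d. \<Sum>b<d. Re (As i $$ (a,b) * M $$ (b,a))))"
    by (simp add: sum_distrib_left sum_distrib_right Re_sum sum.swap[of _ "{..<n}"] mult.assoc)
  also have "\<dots> = (\<Sum>i<n. z i * meas As M i)"
  proof (intro sum.cong arg_cong2[where f = "(*)"] refl)
    fix i assume "i \<in> {..<n}"
    then show "(\<Sum>a<d. \<Sum>b<d. Re (As i $$ (a,b) * M $$ (b,a))) = meas As M i"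
      unfolding meas_def using hinner_hermitian_eq[OF _ assms(2)] assms(1) by simp
  qed
  finally show ?thesis .
qed

subsection \<open>Derivatives along a quadratic path\<close>

lemma sum_sq_quadratic_has_derivative:
  fixes P b c :: "nat \<Rightarrow> real"
  shows "((\<lambda>t. \<Sum>i<n. (P i - t * b i - t\<^sup>2 * c i)\<^sup>2) has_real_derivative
     (\<Sum>i<n. 2 * (P i - x * b i - x\<^sup>2 * c i) * (- b i - 2 * x * c i))) (at x)"
  by (rule DERIV_sum, (rule derivative_eq_intros refl)+, simp add: power2_eq_square)

lemma sum_sq_quadratic_first_derivative:
  fixes P b c :: "nat \<Rightarrow> real"
  assumes "((\<lambda>t. \<Sum>i<n. (P i - t * b i - t\<^sup>2 * c i)\<^sup>2) has_real_derivative D) (at 0)"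
  shows "D = - 2 * (\<Sum>i<n. P i * b i)"
  using DERIV_unique[OF assms sum_sq_quadratic_has_derivative] by (simp add: sum_distrib_left mult.assoc)

lemma sum_sq_quadratic_second_derivative:
  fixes P b c :: "nat \<Rightarrow> real"
  assumes "\<forall>t. ((\<lambda>t. \<Sum>i<n. (P i - t * b i - t\<^sup>2 * c i)\<^sup>2) has_real_derivative g' t) (at t)"
    and "(g' has_real_derivative s) (at 0)"
  shows "s = (\<Sum>i<n. 2 * (b i)\<^sup>2 - 4 * P i * c i)"
proof -
  have "g' = (\<lambda>x. \<Sum>i<n. 2 * (P i - x * b i - x\<^sup>2 * c i) * (- b i - 2 * x * c i))"
    by (intro ext DERIV_unique[OF spec[OF assms(1)] sum_sq_quadratic_has_derivative])
  moreover have "((\<lambda>x. \<Sum>i<n. 2 * (P i - x * b i - x\<^sup>2 * c i) * (- b i - 2 * x * c i))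
      has_real_derivative (\<Sum>i<n. 2 * (b i)\<^sup>2 - 4 * P i * c i)) (at 0)"
    by (rule DERIV_sum, (rule derivative_eq_intros refl)+, simp add: power2_eq_square)
  ultimately show ?thesis using DERIV_unique[OF assms(2)] by blast
qed

subsection \<open>Operator norm bounds\<close>

lemma vnorm_nonneg: "0 \<le> vnorm v"
  unfolding vnorm_def by (simp add: sum_nonneg)

lemma vnorm_scaleR: "vnorm (complex_of_real c \<cdot>\<^sub>v v) = \<bar>c\<bar> * vnorm v"
proof -
  have "(\<Sum>i<dim_vec v. (cmod ((complex_of_real c \<cdot>\<^sub>v v) $ i))\<^sup>2) = c\<^sup>2 * (\<Sum>i<dim_vec v. (cmod (v $ i))\<^sup>2)"
    by (simp add: sum_distrib_left norm_mult power_mult_distrib)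
  then show ?thesis unfolding vnorm_def by (simp add: real_sqrt_mult)
qed

lemma vnorm_index_le: "i < dim_vec v \<Longrightarrow> cmod (v $ i) \<le> vnorm v"
proof -
  assume "i < dim_vec v"
  then have "(cmod (v $ i))\<^sup>2 \<le> (\<Sum>j<dim_vec v. (cmod (v $ j))\<^sup>2)"
    by (intro member_le_sum) auto
  then have "sqrt ((cmod (v $ i))\<^sup>2) \<le> vnorm v" unfolding vnorm_def by (rule real_sqrt_le_mono)
  then show ?thesis by simp
qed

lemma bdd_above_op_norm:
  assumes "B \<in> carrier_mat m d"
  shows "bdd_above {vnorm (B *\<^sub>v v) | v. v \<in> carrier_vec (dim_col B) \<and> vec_entries_in K v \<and> vnorm v \<le> 1}"
proof (rule bdd_aboveI, clarify)
  fix v :: "complex vec" assume v: "v \<in> carrier_vec (dim_col B)" "vnorm v \<le> 1"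
  have dv: "dim_vec v = d" using v assms by auto
  have entry: "cmod ((B *\<^sub>v v) $ i) \<le> (\<Sum>j<d. cmod (B $$ (i,j)))" if i: "i < m" for i
  proof -
    have "(B *\<^sub>v v) $ i = (\<Sum>j<d. B $$ (i,j) * v $ j)"
      using assms i dv by (simp add: scalar_prod_def atLeast0LessThan)
    then have "cmod ((B *\<^sub>v v) $ i) \<le> (\<Sum>j<d. cmod (B $$ (i,j) * v $ j))"
      by (simp add: norm_sum)
    also have "\<dots> \<le> (\<Sum>j<d. cmod (B $$ (i,j)))"
    proof (rule sum_mono)
      fix j assume "j \<in> {..<d}"
      then have "cmod (v $ j) \<le> 1" using vnorm_index_le[of j v] v dv by auto
      then show "cmod (B $$ (i,j) * v $ j) \<le> cmod (B $$ (i,j))"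
        by (simp add: norm_mult mult_left_le)
    qed
    finally show ?thesis .
  qed
  have "vnorm (B *\<^sub>v v) = sqrt (\<Sum>i<m. (cmod ((B *\<^sub>v v) $ i))\<^sup>2)"
    unfolding vnorm_def using assms by simp
  also have "\<dots> \<le> sqrt (\<Sum>i<m. (\<Sum>j<d. cmod (B $$ (i,j)))\<^sup>2)"
    by (intro real_sqrt_le_mono sum_mono power_mono entry) auto
  finally show "vnorm (B *\<^sub>v v) \<le> sqrt (\<Sum>i<m. (\<Sum>j<d. cmod (B $$ (i,j)))\<^sup>2)" .
qed

lemma op_norm_mult_vec:
  assumes K: "field_choice K" and B: "B \<in> carrier_mat m d"
    and v: "v \<in> carrier_vec d" "vec_entries_in K v"
  shows "vnorm (B *\<^sub>v v) \<le> op_norm K B * vnorm v"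
proof (cases "vnorm v = 0")
  case True
  have "\<forall>i<d. cmod (v $ i) = 0" using vnorm_index_le[of _ v] True v(1) by (auto intro: antisym)
  then have "v = 0\<^sub>v d" using v(1) by (auto intro!: eq_vecI)
  then have "vnorm (B *\<^sub>v v) = 0" using B unfolding vnorm_def by simp
  then show ?thesis using True by simp
next
  case False
  define N where "N = vnorm v"
  have N: "N > 0" using False vnorm_nonneg[of v] unfolding N_def by linarith
  define w where "w = complex_of_real (1 / N) \<cdot>\<^sub>v v"
  have w: "w \<in> carrier_vec d" using v unfolding w_def by simp
  have "w $ i \<in> K" if i: "i < d" for i
  proof -
    have "w $ i = complex_of_real (1 / N) * v $ i" using v(1) i unfolding w_def by simp
    moreover have "v $ i \<in> K" using v i unfolding vec_entries_in_def by auto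
    ultimately show ?thesis by (metis K field_choice_mult field_choice_of_real)
  qed
  then have wK: "vec_entries_in K w" using w unfolding vec_entries_in_def by simp
  have wn: "vnorm w = 1" unfolding w_def vnorm_scaleR using N unfolding N_def by simp
  have "B *\<^sub>v w = complex_of_real (1 / N) \<cdot>\<^sub>v (B *\<^sub>v v)"
    unfolding w_def using B v(1) by (simp add: mult_mat_vec)
  then have "vnorm (B *\<^sub>v w) = \<bar>1 / N\<bar> * vnorm (B *\<^sub>v v)"
    by (simp only: vnorm_scaleR)
  then have Bw: "vnorm (B *\<^sub>v w) = vnorm (B *\<^sub>v v) / N"
    using N by simp
  have "vnorm (B *\<^sub>v w) \<le> op_norm K B"
    unfolding op_norm_def
    by (rule cSup_upper[OF _ bdd_above_op_norm[OF B]]) (use w wK wn B in auto)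
  then show ?thesis using Bw N unfolding N_def by (simp add: field_simps)
qed

lemma hform_le_op_norm:
  assumes K: "field_choice K" and B: "B \<in> carrier_mat d d" and u: "\<And>a. a < d \<Longrightarrow> u a \<in> K"
  shows "hform d B u u \<le> op_norm K B * (\<Sum>a<d. (cmod (u a))\<^sup>2)"
proof -
  define v where "v = vec d u"
  have v: "v \<in> carrier_vec d" "vec_entries_in K v"
    using u unfolding v_def vec_entries_in_def by auto
  have Bv: "dim_vec (B *\<^sub>v v) = d" using B by simp
  have nv: "vnorm v = L2_set (\<lambda>a. cmod (u a)) {..<d}"
    unfolding vnorm_def L2_set_def v_def by simp
  have nBv: "vnorm (B *\<^sub>v v) = L2_set (\<lambda>a. cmod ((B *\<^sub>v v) $ a)) {..<d}"
    unfolding vnorm_def L2_set_def Bv by (rule refl)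
  have "hform d B u u \<le> cmod (\<Sum>a<d. cnj (u a) * (B *\<^sub>v v) $ a)"
    unfolding hform_eq_Re_mult_vec[OF B] v_def by (rule complex_Re_le_cmod)
  also have "\<dots> \<le> (\<Sum>a<d. \<bar>cmod (u a)\<bar> * \<bar>cmod ((B *\<^sub>v v) $ a)\<bar>)"
    by (rule order_trans[OF norm_sum]) (simp add: norm_mult)
  also have "\<dots> \<le> vnorm v * vnorm (B *\<^sub>v v)" unfolding nv nBv by (rule L2_set_mult_ineq)
  also have "\<dots> \<le> vnorm v * (op_norm K B * vnorm v)"
    by (rule mult_left_mono[OF op_norm_mult_vec[OF K B v] vnorm_nonneg])
  also have "\<dots> = op_norm K B * (\<Sum>a<d. (cmod (u a))\<^sup>2)"
    unfolding vnorm_def v_def by (simp add: power2_eq_square[symmetric] sum_nonneg)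
  finally show ?thesis .
qed

lemma sum_meas_le_op_norm_frob_sq:
  assumes K: "field_choice K" and As: "\<forall>i<n. hermitian d (As i)"
    and D: "D \<in> carrier_mat d m" "entries_in K D"
  shows "(\<Sum>i<n. z i * meas As (D * adj D) i) \<le> op_norm K (meas_adj d n As z) * frob_sq D"
proof -
  let ?B = "meas_adj d n As z"
  have B: "?B \<in> carrier_mat d d" unfolding meas_adj_def by simp
  have DD: "D * adj D \<in> carrier_mat d d" using D(1) by (rule mult_adj_carrier)
  have "(\<Sum>i<n. z i * meas As (D * adj D) i) = hinner ?B (D * adj D)"
    using hinner_meas_adj[OF As DD] by simp
  also have "\<dots> = (\<Sum>k<m. hform d ?B (\<lambda>a. D $$ (a,k)) (\<lambda>a. D $$ (a,k)))"
    by (rule hinner_mult_adj[OF hermitian_meas_adj[OF As] D(1) D(1)])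
  also have "\<dots> \<le> (\<Sum>k<m. op_norm K ?B * (\<Sum>a<d. (cmod (D $$ (a,k)))\<^sup>2))"
    using D by (intro sum_mono hform_le_op_norm[OF K B]) (auto intro: entries_in_index)
  also have "\<dots> = op_norm K ?B * frob_sq D"
    using D(1) by (simp add: frob_sq_def sum_distrib_left sum.swap[of _ "{..<m}"])
  finally show ?thesis .
qed

subsection \<open>Second-order critical points\<close>

definition single_column :: "nat \<Rightarrow> nat \<Rightarrow> nat \<Rightarrow> (nat \<Rightarrow> complex) \<Rightarrow> complex mat" where
  "single_column d p j u = mat d p (\<lambda>(a,k). if k = j then u a else 0)"

lemma hinner_single_column_line:
  assumes A: "hermitian d A" and X: "X \<in> carrier_mat d p" and j: "j < p"
  shows "hinner A ((X + complex_of_real t \<cdot>\<^sub>m single_column d p j u) * adj (X + complex_of_real t \<cdot>\<^sub>m single_column d p j u))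
    = hinner A (X * adj X) + t * (2 * hform d A (\<lambda>a. X $$ (a,j)) u) + t\<^sup>2 * hform d A u u"
proof -
  let ?Y = "X + complex_of_real t \<cdot>\<^sub>m single_column d p j u"
  let ?x = "\<lambda>k a. X $$ (a,k)" and ?v = "\<lambda>k a. if k = j then u a else 0"
  have Y: "?Y \<in> carrier_mat d p" using X unfolding single_column_def by simp
  have column: "hform d A (\<lambda>a. ?Y $$ (a,k)) (\<lambda>a. ?Y $$ (a,k))
      = hform d A (?x k) (?x k) + (if k = j then t * (2 * hform d A (?x j) u) + t\<^sup>2 * hform d A u u else 0)"
    if "k < p" for k
  proof -
    have "hform d A (\<lambda>a. ?Y $$ (a,k)) (\<lambda>a. ?Y $$ (a,k))
        = hform d A (\<lambda>a. ?x k a + complex_of_real t * ?v k a) (\<lambda>a. ?x k a + complex_of_real t * ?v k a)"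
      using X that by (intro hform_cong) (simp_all add: single_column_def)
    also have "\<dots> = hform d A (?x k) (?x k) + (if k = j then t * (2 * hform d A (?x j) u) + t\<^sup>2 * hform d A u u else 0)"
      using hform_commute[OF A, of u "?x j"] by (cases "k = j") (simp_all add: hform_line)
    finally show ?thesis .
  qed
  have "hinner A (?Y * adj ?Y) = (\<Sum>k<p. hform d A (\<lambda>a. ?Y $$ (a,k)) (\<lambda>a. ?Y $$ (a,k)))"
    by (rule hinner_mult_adj[OF A Y Y])
  also have "\<dots> = (\<Sum>k<p. hform d A (?x k) (?x k))
      + (\<Sum>k<p. if k = j then t * (2 * hform d A (?x j) u) + t\<^sup>2 * hform d A u u else 0)"
    using column by (simp add: sum.distrib)
  also have "\<dots> = hinner A (X * adj X) + t * (2 * hform d A (?x j) u) + t\<^sup>2 * hform d A u u"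
    using j by (simp add: hinner_mult_adj[OF A X X])
  finally show ?thesis .
qed

locale second_order_critical_point =
  fixes K :: "complex set" and d p n :: nat and As :: "nat \<Rightarrow> complex mat"
    and y :: "nat \<Rightarrow> real" and X :: "complex mat"
  assumes field: "field_choice K"
    and psd_As: "\<forall>i<n. psd K d (As i)"
    and critical: "second_order_critical K d p n As y X"
begin

lemma hermitian_As: "\<forall>i<n. hermitian d (As i)"
  using psd_As psd_hermitian by blast

lemma X_carrier: "X \<in> carrier_mat d p"
  using critical unfolding second_order_critical_def by simp

lemma X_entries: "entries_in K X"
  using critical unfolding second_order_critical_def by simp

lemma X_index_in_K: "a < d \<Longrightarrow> k < p \<Longrightarrow> X $$ (a,k) \<in> K"
  by (rule entries_in_index[OF X_entries X_carrier])

definition residual :: "nat \<Rightarrow> real" where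
  "residual i = meas As (X * adj X) i - y i"

text \<open>The gradient of f_p at X is 4 residual_adj X.\<close>
abbreviation residual_adj :: "complex mat" where
  "residual_adj \<equiv> meas_adj d n As residual"

lemma hermitian_residual_adj: "hermitian d residual_adj"
  using hermitian_meas_adj[OF hermitian_As] .

lemma fobj_along_single_column:
  assumes "j < p"
  shows "fobj n As y (X + complex_of_real t \<cdot>\<^sub>m single_column d p j u)
    = (\<Sum>i<n. (- residual i - t * (2 * hform d (As i) (\<lambda>a. X $$ (a,j)) u) - t\<^sup>2 * hform d (As i) u u)\<^sup>2)"
  unfolding fobj_def
proof (intro sum.cong refl)
  fix i assume "i \<in> {..<n}"
  then have "hermitian d (As i)" using hermitian_As by simp
  then have "meas As ((X + complex_of_real t \<cdot>\<^sub>m single_column d p j u) * adj (X + complex_of_real t \<cdot>\<^sub>m single_column d p j u)) i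
      = residual i + y i + t * (2 * hform d (As i) (\<lambda>a. X $$ (a,j)) u) + t\<^sup>2 * hform d (As i) u u"
    unfolding meas_def residual_def by (simp add: hinner_single_column_line[OF _ X_carrier assms])
  then show "(y i - meas As ((X + complex_of_real t \<cdot>\<^sub>m single_column d p j u) * adj (X + complex_of_real t \<cdot>\<^sub>m single_column d p j u)) i)\<^sup>2
      = (- residual i - t * (2 * hform d (As i) (\<lambda>a. X $$ (a,j)) u) - t\<^sup>2 * hform d (As i) u u)\<^sup>2"
    by (simp add: algebra_simps)
qed

lemma single_column_admissible:
  assumes "\<And>a. a < d \<Longrightarrow> u a \<in> K"
  shows "single_column d p j u \<in> carrier_mat d p" "entries_in K (single_column d p j u)"
  using assms field_choice_zero[OF field] unfolding single_column_def entries_in_def by auto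

lemma gradient_vanishes:
  assumes j: "j < p" and u: "\<And>a. a < d \<Longrightarrow> u a \<in> K"
  shows "hform d residual_adj (\<lambda>a. X $$ (a,j)) u = 0"
proof -
  have "((\<lambda>t. fobj n As y (X + complex_of_real t \<cdot>\<^sub>m single_column d p j u)) has_real_derivative 0) (at 0)"
    using critical single_column_admissible[where u = u, OF u] unfolding second_order_critical_def Let_def by blast
  then have "0 = - 2 * (\<Sum>i<n. - residual i * (2 * hform d (As i) (\<lambda>a. X $$ (a,j)) u))"
    unfolding fobj_along_single_column[OF j] by (rule sum_sq_quadratic_first_derivative)
  then have "4 * (\<Sum>i<n. residual i * hform d (As i) (\<lambda>a. X $$ (a,j)) u) = 0"
    by (simp add: sum_distrib_left ac_simps)
  then show ?thesis
    by (simp add: hform_meas_adj)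
qed

lemma hessian_column_nonneg:
  assumes j: "j < p" and u: "\<And>a. a < d \<Longrightarrow> u a \<in> K"
  shows "0 \<le> 2 * (\<Sum>i<n. (hform d (As i) (\<lambda>a. X $$ (a,j)) u)\<^sup>2) + hform d residual_adj u u"
proof -
  obtain g' s where
    g': "\<forall>t. ((\<lambda>t. fobj n As y (X + complex_of_real t \<cdot>\<^sub>m single_column d p j u)) has_real_derivative g' t) (at t)"
    and s: "(g' has_real_derivative s) (at 0)" "0 \<le> s"
    using critical single_column_admissible[where u = u, OF u] unfolding second_order_critical_def Let_def by blast
  have "s = (\<Sum>i<n. 2 * (2 * hform d (As i) (\<lambda>a. X $$ (a,j)) u)\<^sup>2 - 4 * (- residual i) * hform d (As i) u u)"
    using g' s(1) unfolding fobj_along_single_column[OF j] by (rule sum_sq_quadratic_second_derivative)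
  also have "\<dots> = 4 * (2 * (\<Sum>i<n. (hform d (As i) (\<lambda>a. X $$ (a,j)) u)\<^sup>2) + hform d residual_adj u u)"
    by (simp add: hform_meas_adj sum_distrib_left sum.distrib algebra_simps power2_eq_square)
  finally show ?thesis using s(2) by simp
qed

lemma hessian_trace_nonneg:
  assumes u: "\<And>a. a < d \<Longrightarrow> u a \<in> K"
  shows "0 \<le> 2 * (\<Sum>i<n. meas As (X * adj X) i * hform d (As i) u u) + real p * hform d residual_adj u u"
proof -
  let ?x = "\<lambda>j a. X $$ (a,j)"
  have cauchy_schwarz: "(hform d (As i) (?x j) u)\<^sup>2 \<le> hform d (As i) (?x j) (?x j) * hform d (As i) u u"
    if "i < n" "j < p" for i j
    using that psd_As u X_index_in_K by (intro hform_cauchy_schwarz[OF _ field]) auto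
  have meas_X: "meas As (X * adj X) i = (\<Sum>j<p. hform d (As i) (?x j) (?x j))" if "i < n" for i
    unfolding meas_def using hinner_mult_adj[OF _ X_carrier X_carrier] hermitian_As that by simp
  have "0 \<le> (\<Sum>j<p. 2 * (\<Sum>i<n. (hform d (As i) (?x j) u)\<^sup>2) + hform d residual_adj u u)"
    using hessian_column_nonneg u by (intro sum_nonneg) auto
  also have "\<dots> \<le> (\<Sum>j<p. 2 * (\<Sum>i<n. hform d (As i) (?x j) (?x j) * hform d (As i) u u) + hform d residual_adj u u)"
    using cauchy_schwarz by (intro sum_mono add_right_mono mult_left_mono) auto
  also have "\<dots> = 2 * (\<Sum>i<n. \<Sum>j<p. hform d (As i) (?x j) (?x j) * hform d (As i) u u) + real p * hform d residual_adj u u"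
    by (simp add: sum.distrib sum_distrib_left sum.swap[of _ "{..<p}"])
  also have "\<dots> = 2 * (\<Sum>i<n. meas As (X * adj X) i * hform d (As i) u u) + real p * hform d residual_adj u u"
    using meas_X by (simp add: sum_distrib_right)
  finally show ?thesis .
qed

lemma gradient_vanishes_mult:
  assumes R: "R \<in> carrier_mat p r" "entries_in K R" and l: "l < r" and v: "\<And>a. a < d \<Longrightarrow> v a \<in> K"
  shows "hform d residual_adj (\<lambda>a. (X * R) $$ (a,l)) v = 0"
proof -
  have "hform d residual_adj (\<lambda>a. (X * R) $$ (a,l)) v = hform d residual_adj (\<lambda>a. \<Sum>k<p. R $$ (k,l) * X $$ (a,k)) v"
    using X_carrier R(1) l by (intro hform_cong) (simp_all add: scalar_prod_def atLeast0LessThan mult.commute)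
  also have "\<dots> = 0"
    unfolding hform_sum_left hform_scale_left using R l v
    by (intro sum.neutral ballI gradient_vanishes)
      (auto intro: field_choice_mult field_choice_cnj field entries_in_index)
  finally show ?thesis .
qed

lemma hinner_residual_adj_fit: "hinner residual_adj (X * adj X) = 0"
  unfolding hinner_mult_adj[OF hermitian_residual_adj X_carrier X_carrier]
  by (intro sum.neutral ballI gradient_vanishes) (auto intro: X_index_in_K)

lemma shift_admissible:
  assumes Z: "Z \<in> carrier_mat d r" "entries_in K Z" and R: "R \<in> carrier_mat p r" "entries_in K R"
  shows "Z - X * R \<in> carrier_mat d r" "entries_in K (Z - X * R)"
  using Z R X_carrier X_entries by (auto intro!: entries_in_minus[OF field] entries_in_mult[OF field])

lemma hinner_residual_adj_shift:
  assumes Z: "Z \<in> carrier_mat d r" "entries_in K Z" and R: "R \<in> carrier_mat p r" "entries_in K R"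
  shows "hinner residual_adj ((Z - X * R) * adj (Z - X * R)) = hinner residual_adj (Z * adj Z)"
proof -
  let ?E = residual_adj
  note D = shift_admissible[OF Z R]
  have column: "hform d ?E (\<lambda>a. (Z - X * R) $$ (a,l)) (\<lambda>a. (Z - X * R) $$ (a,l))
      = hform d ?E (\<lambda>a. Z $$ (a,l)) (\<lambda>a. Z $$ (a,l))" if l: "l < r" for l
  proof -
    let ?z = "\<lambda>a. Z $$ (a,l)" and ?w = "\<lambda>a. (X * R) $$ (a,l)"
    have entry: "(Z - X * R) $$ (a,l) = ?z a - ?w a" if "a < d" for a
      using Z(1) R(1) X_carrier l that by simp
    have "?z a \<in> K" if "a < d" for a using that l by (rule entries_in_index[OF Z(2) Z(1)])
    then have w_z: "hform d ?E ?w ?z = 0" by (intro gradient_vanishes_mult[OF R l])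
    have "?z a - ?w a \<in> K" if "a < d" for a
      using entries_in_index[OF D(2) D(1) that l] entry[OF that] by simp
    then have w_zw: "hform d ?E ?w (\<lambda>a. ?z a - ?w a) = 0" by (intro gradient_vanishes_mult[OF R l])
    have "hform d ?E (\<lambda>a. (Z - X * R) $$ (a,l)) (\<lambda>a. (Z - X * R) $$ (a,l))
        = hform d ?E (\<lambda>a. ?z a - ?w a) (\<lambda>a. ?z a - ?w a)"
      using entry by (intro hform_cong) auto
    also have "\<dots> = hform d ?E ?z ?z - hform d ?E ?w ?z - hform d ?E ?w (\<lambda>a. ?z a - ?w a)"
      unfolding hform_diff_left hform_diff_right using hform_commute[OF hermitian_residual_adj, of ?z ?w] by simp
    also have "\<dots> = hform d ?E ?z ?z"
      using w_z w_zw by simp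
    finally show ?thesis .
  qed
  then show ?thesis
    unfolding hinner_mult_adj[OF hermitian_residual_adj D(1) D(1)] hinner_mult_adj[OF hermitian_residual_adj Z(1) Z(1)]
    by simp
qed

lemma hessian_trace_nonneg_mat:
  assumes D: "D \<in> carrier_mat d m" "entries_in K D"
  shows "0 \<le> 2 * (\<Sum>i<n. meas As (X * adj X) i * meas As (D * adj D) i) + real p * hinner residual_adj (D * adj D)"
proof -
  let ?\<delta> = "\<lambda>l a. D $$ (a,l)"
  have meas_D: "meas As (D * adj D) i = (\<Sum>l<m. hform d (As i) (?\<delta> l) (?\<delta> l))" if "i < n" for i
    unfolding meas_def using hinner_mult_adj[OF _ D(1) D(1)] hermitian_As that by simp
  have "0 \<le> (\<Sum>l<m. 2 * (\<Sum>i<n. meas As (X * adj X) i * hform d (As i) (?\<delta> l) (?\<delta> l))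
      + real p * hform d residual_adj (?\<delta> l) (?\<delta> l))"
    using D by (intro sum_nonneg hessian_trace_nonneg) (auto intro: entries_in_index)
  also have "\<dots> = 2 * (\<Sum>i<n. meas As (X * adj X) i * (\<Sum>l<m. hform d (As i) (?\<delta> l) (?\<delta> l)))
      + real p * (\<Sum>l<m. hform d residual_adj (?\<delta> l) (?\<delta> l))"
    by (simp add: sum.distrib sum_distrib_left sum.swap[of _ "{..<m}"])
  also have "\<dots> = 2 * (\<Sum>i<n. meas As (X * adj X) i * meas As (D * adj D) i) + real p * hinner residual_adj (D * adj D)"
    using meas_D by (simp add: hinner_mult_adj[OF hermitian_residual_adj D(1) D(1)])
  finally show ?thesis .
qed

lemma critical_residual_bound:
  assumes Z: "Z \<in> carrier_mat d r" "entries_in K Z" and R: "R \<in> carrier_mat p r" "entries_in K R"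
  shows "(\<Sum>i<n. (meas As (X * adj X - Z * adj Z) i)\<^sup>2)
     \<le> (\<Sum>i<n. (y i - meas As (Z * adj Z) i) * meas As (X * adj X - Z * adj Z) i)
       + 2 / (real p + 2) * (\<Sum>i<n. y i * meas As ((Z - X * R) * adj (Z - X * R)) i)"
proof -
  let ?a = "meas As (X * adj X)" and ?z = "meas As (Z * adj Z)" and ?m = "meas As (X * adj X - Z * adj Z)"
  let ?D = "Z - X * R"
  let ?M = "meas As (?D * adj ?D)"
  note D = shift_admissible[OF Z R]
  have XX: "X * adj X \<in> carrier_mat d d" and ZZ: "Z * adj Z \<in> carrier_mat d d" and DD: "?D * adj ?D \<in> carrier_mat d d"
    using X_carrier Z(1) D(1) by (simp_all add: mult_adj_carrier)
  define S where "S = (\<Sum>i<n. ?a i * ?M i)"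
  define T where "T = (\<Sum>i<n. residual i * ?M i)"
  have "T = hinner residual_adj (?D * adj ?D)"
    unfolding T_def by (rule hinner_meas_adj[OF hermitian_As DD, symmetric])
  also have "\<dots> = hinner residual_adj (Z * adj Z)"
    by (rule hinner_residual_adj_shift[OF Z R])
  also have "\<dots> = (\<Sum>i<n. residual i * ?z i)"
    by (rule hinner_meas_adj[OF hermitian_As ZZ])
  finally have T_shift: "T = (\<Sum>i<n. residual i * ?z i)" .
  have fit: "(\<Sum>i<n. residual i * ?a i) = 0"
    using hinner_residual_adj_fit unfolding hinner_meas_adj[OF hermitian_As XX] .
  have trace: "0 \<le> 2 * S + real p * T"
    using hessian_trace_nonneg_mat[OF D] unfolding hinner_meas_adj[OF hermitian_As DD] S_def T_def .
  have split: "(?m i)\<^sup>2 = (y i - ?z i) * ?m i + (residual i * ?a i - residual i * ?z i)" if "i < n" for i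
  proof -
    have m: "?m i = ?a i - ?z i"
      unfolding meas_def using hinner_diff[OF _ XX ZZ] hermitian_As that by simp
    have "(?a i - ?z i)\<^sup>2 = (y i - ?z i) * (?a i - ?z i) + ((?a i - y i) * ?a i - (?a i - y i) * ?z i)"
      by (simp add: power2_eq_square algebra_simps)
    then show ?thesis unfolding m residual_def .
  qed
  have "(\<Sum>i<n. (?m i)\<^sup>2) = (\<Sum>i<n. (y i - ?z i) * ?m i) + ((\<Sum>i<n. residual i * ?a i) - (\<Sum>i<n. residual i * ?z i))"
    using split by (simp add: sum.distrib sum_subtractf)
  also have "\<dots> = (\<Sum>i<n. (y i - ?z i) * ?m i) - T"
    using fit T_shift by simp
  also have "\<dots> \<le> (\<Sum>i<n. (y i - ?z i) * ?m i) + 2 / (real p + 2) * (S - T)"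
  proof -
    have "0 \<le> (2 * S + real p * T) / (real p + 2)"
      using trace by simp
    also have "\<dots> = 2 / (real p + 2) * (S - T) + T"
      by (simp add: field_simps)
    finally show ?thesis by linarith
  qed
  also have "S - T = (\<Sum>i<n. y i * ?M i)"
    unfolding S_def T_def sum_subtractf[symmetric] residual_def by (intro sum.cong refl) (simp add: algebra_simps)
  finally show ?thesis .
qed

end

theorem lemma1:
  fixes K :: "complex set" and d n p r :: nat
    and As :: "nat \<Rightarrow> complex mat" and Zs Xs X R :: "complex mat"
    and \<xi> y :: "nat \<Rightarrow> real"
  assumes F: "field_choice K"
    and A_psd: "\<forall>i<n. psd K d (As i) \<and> entries_in K (As i)"
    and Z_psd: "psd K d Zs" and Z_K: "entries_in K Zs"
    and Z_rank: "vec_space.rank d Zs = r" and r_pos: "r \<ge> 1"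
    and y_def: "\<forall>i<n. y i = meas As Zs i + \<xi> i"
    and Xs_dim: "Xs \<in> carrier_mat d r" and Xs_K: "entries_in K Xs"
    and Z_fac: "Zs = Xs * adj Xs"
    and crit: "second_order_critical K d p n As y X"
    and R_dim: "R \<in> carrier_mat p r" and R_K: "entries_in K R"
  shows "(\<Sum>i<n. (meas As (X * adj X - Zs) i)\<^sup>2)
           \<le> (\<Sum>i<n. \<xi> i * meas As (X * adj X - Zs) i)
              + 2 / (real p + 2) * (\<Sum>i<n. y i * meas As ((Xs - X * R) * adj (Xs - X * R)) i)
       \<and> (\<Sum>i<n. \<xi> i * meas As (X * adj X - Zs) i)
              + 2 / (real p + 2) * (\<Sum>i<n. y i * meas As ((Xs - X * R) * adj (Xs - X * R)) i)
           \<le> (\<Sum>i<n. \<xi> i * meas As (X * adj X - Zs) i)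
              + 2 * op_norm K (meas_adj d n As y) / (real p + 2) * frob_sq (Xs - X * R)"
proof -
  interpret second_order_critical_point K d p n As y X
    using F A_psd crit by unfold_locales auto
  let ?m = "meas As (X * adj X - Zs)" and ?M = "meas As ((Xs - X * R) * adj (Xs - X * R))"
  have "(\<Sum>i<n. \<xi> i * ?m i) = (\<Sum>i<n. (y i - meas As (Xs * adj Xs) i) * ?m i)"
    using y_def Z_fac by (intro sum.cong) auto
  then have residual_bound: "(\<Sum>i<n. (?m i)\<^sup>2) \<le> (\<Sum>i<n. \<xi> i * ?m i) + 2 / (real p + 2) * (\<Sum>i<n. y i * ?M i)"
    using critical_residual_bound[OF Xs_dim Xs_K R_dim R_K] unfolding Z_fac by simp
  have "(\<Sum>i<n. y i * ?M i) \<le> op_norm K (meas_adj d n As y) * frob_sq (Xs - X * R)"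
    using shift_admissible[OF Xs_dim Xs_K R_dim R_K] by (intro sum_meas_le_op_norm_frob_sq[OF F hermitian_As])
  then have "2 / (real p + 2) * (\<Sum>i<n. y i * ?M i)
      \<le> 2 * op_norm K (meas_adj d n As y) / (real p + 2) * frob_sq (Xs - X * R)"
    by (simp add: divide_right_mono)
  with residual_bound show ?thesis by simp
qed

end
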